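(* Let $Z$ be a real-valued random variable with $\mathbb E(Z)=0$ and $\mathbb E(Z^2)\le2$, with distribution function $F_Z$, and let $\Phi$ be the distribution function of a standard normal random variable $Y$. For $p\ge1$ let $K_p=\int_0^1|F_Z^{-1}(t)-\Phi^{-1}(t)|^p\,dt$. Then for every $u\in(0,1/2]$, $$|F_Z^{-1}(1-u)-\Phi^{-1}(1-u)|\le\max\Big(\Big(\frac{(p+1)eK_p}{u\,Q_{1,Y}(u)}\Big)^{1/(p+1)},\ \Big(\frac{(p+1)eK_p}{u}\Big)^{1/p}\Big).$$
   Context: $F_Z^{-1}$ denotes the generalized inverse $F_Z^{-1}(t)=\inf\{x:F_Z(x)\ge t\}$. For a random variable $X$ with distribution function $F_X$, $Q_{1,X}(u)=\frac1u\int_0^uF_X^{-1}(1-t)\,dt$; thus $Q_{1,Y}(u)=\frac1u\int_0^u\Phi^{-1}(1-t)\,dt$. *)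

theory Defs
  imports "HOL-Probability.Probability"
begin

definition geninv :: "(real \<Rightarrow> real) \<Rightarrow> real \<Rightarrow> real" where
  "geninv F t = Inf {x. t \<le> F x}"

definition Phi :: "real \<Rightarrow> real" where
  "Phi = cdf (density lborel std_normal_density)"

definition Q1 :: "(real \<Rightarrow> real) \<Rightarrow> real \<Rightarrow> real" where
  "Q1 F u = (1 / u) * (LBINT t=0..u. geninv F (1 - t))"

definition Kp :: "(real \<Rightarrow> real) \<Rightarrow> real \<Rightarrow> ennreal" where
  "Kp F p = (\<integral>\<^sup>+ t\<in>{0<..<1}. ennreal (\<bar>geninv F t - geninv Phi t\<bar> powr p) \<partial>lborel)"

end

theory Submission
  imports Defs
begin

(* Let b = Phi^-1(1 - u) and m = phi(b) / e. The function g(t) = phi(Phi^-1(t)) has derivative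
   -Phi^-1(t), so it is concave and positive on (0,1); hence g >= g(1 - u) / e on the window
   |t - (1 - u)| <= u / e, and there Phi^-1, whose derivative is 1 / g, is (1/m)-Lipschitz.
   As F_Z^-1 is nondecreasing, on the half of the window towards which F_Z^-1(1 - u) deviates
   from b the gap |F_Z^-1(t) - Phi^-1(t)| stays above d - |t - (1 - u)| / m, where d is the gap
   at 1 - u. It therefore dominates a tent of height d and half-width L = min (m d) (u / e), so
   K_p >= L d^p / (p + 1). The two possible values of L give the two terms of the maximum,
   because u Q_{1,Y}(u) = phi(b). *)

lemma concave_on_subset: "concave_on T f \<Longrightarrow> S \<subseteq> T \<Longrightarrow> convex S \<Longrightarrow> concave_on S f"
  unfolding concave_on_def by (rule convex_on_subset)

lemma concave_on_nonneg_ge_right: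
  fixes g :: "real \<Rightarrow> real"
  assumes g: "concave_on {a<..<b} g" and g_nonneg: "\<And>r. r \<in> {a<..<b} \<Longrightarrow> 0 \<le> g r"
    and "a < x" "x \<le> t" "t < b"
  shows "g x * (b - t) / (b - x) \<le> g t"
proof (rule tendsto_le[OF trivial_limit_at_left_real])
  show "((\<lambda>r. g x * (r - t) / (r - x)) \<longlongrightarrow> g x * (b - t) / (b - x)) (at_left b)"
    using assms by (auto intro!: tendsto_eq_intros)
  have "eventually (\<lambda>r. r \<in> {t<..<b}) (at_left b)"
    using assms by (intro eventually_at_left_real)
  then show "eventually (\<lambda>r. g x * (r - t) / (r - x) \<le> g t) (at_left b)"
  proof eventually_elim
    fix r assume r: "r \<in> {t<..<b}"
    have "g x * (r - t) / (r - x) = (0 - g x) / (r - x) * (t - x) + g x"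
      using assms r by (simp add: field_simps)
    also have "\<dots> \<le> (g r - g x) / (r - x) * (t - x) + g x"
      using assms r g_nonneg[of r] by (intro add_right_mono mult_right_mono divide_right_mono) auto
    also have "\<dots> \<le> g t"
      using assms r by (intro concave_onD_Icc' concave_on_subset[OF g]) auto
    finally show "g x * (r - t) / (r - x) \<le> g t" .
  qed
qed simp

lemma concave_on_nonneg_ge_left:
  fixes g :: "real \<Rightarrow> real"
  assumes g: "concave_on {a<..<b} g" and g_nonneg: "\<And>r. r \<in> {a<..<b} \<Longrightarrow> 0 \<le> g r"
    and "a < t" "t \<le> x" "x < b"
  shows "g x * (t - a) / (x - a) \<le> g t"
proof (rule tendsto_le[OF trivial_limit_at_right_real])
  show "((\<lambda>r. g x * (t - r) / (x - r)) \<longlongrightarrow> g x * (t - a) / (x - a)) (at_right a)"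
    using assms by (auto intro!: tendsto_eq_intros)
  have "eventually (\<lambda>r. r \<in> {a<..<t}) (at_right a)"
    using assms by (intro eventually_at_right_real)
  then show "eventually (\<lambda>r. g x * (t - r) / (x - r) \<le> g t) (at_right a)"
  proof eventually_elim
    fix r assume r: "r \<in> {a<..<t}"
    have "g x * (t - r) / (x - r) = (0 - g x) / (x - r) * (x - t) + g x"
      using assms r by (simp add: field_simps)
    also have "\<dots> \<le> (g r - g x) / (x - r) * (x - t) + g x"
      using assms r g_nonneg[of r] by (intro add_right_mono mult_right_mono divide_right_mono) auto
    also have "\<dots> \<le> g t"
      using assms r by (intro concave_onD_Icc'' concave_on_subset[OF g]) auto
    finally show "g x * (t - r) / (x - r) \<le> g t" .
  qed
qed simp

lemma concave_on_unit_interval_ge: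
  fixes g :: "real \<Rightarrow> real"
  assumes g: "concave_on {0<..<1} g" and g_nonneg: "\<And>r. r \<in> {0<..<1} \<Longrightarrow> 0 \<le> g r"
    and x: "x \<in> {0<..<1}" and t: "t \<in> {0<..<1}" and near: "\<bar>t - x\<bar> \<le> \<delta> * min x (1 - x)"
  shows "(1 - \<delta>) * g x \<le> g t"
proof -
  have "0 < min x (1 - x)"
    using x by simp
  then have "0 \<le> \<delta>"
    using near by (smt (verit) zero_le_mult_iff)
  then have near_left: "x - t \<le> \<delta> * x" and near_right: "t - x \<le> \<delta> * (1 - x)"
    using near by (smt (verit) min.cobounded1 min.cobounded2 mult_left_mono)+
  show ?thesis
  proof (cases "x \<le> t")
    case True
    have "(1 - \<delta>) * g x \<le> (1 - t) / (1 - x) * g x"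
      using x near_right g_nonneg[OF x] by (intro mult_right_mono) (simp_all add: field_simps)
    also have "\<dots> = g x * (1 - t) / (1 - x)"
      by simp
    also have "\<dots> \<le> g t"
      using x t True by (intro concave_on_nonneg_ge_right[OF g g_nonneg]) auto
    finally show ?thesis .
  next
    case False
    have "(1 - \<delta>) * g x \<le> t / x * g x"
      using x near_left g_nonneg[OF x] by (intro mult_right_mono) (simp_all add: field_simps)
    also have "\<dots> = g x * t / x"
      by simp
    also have "\<dots> \<le> g t"
      using concave_on_nonneg_ge_left[OF g g_nonneg, of t x] x t False by simp
    finally show ?thesis .
  qed
qed

lemma has_integral_tent_powr:
  fixes L p c :: real
  assumes L: "0 \<le> L" and p: "-1 < p"
  shows "((\<lambda>t. (L - \<bar>t - c\<bar>) powr p) has_integral L powr (p + 1) / (p + 1)) {c..c + L}"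
    and "((\<lambda>t. (L - \<bar>t - c\<bar>) powr p) has_integral L powr (p + 1) / (p + 1)) {c - L..c}"
proof -
  note base = has_integral_powr_from_0[OF p L]
  have "((\<lambda>x. (- x) powr p) has_integral L powr (p + 1) / (p + 1)) {- L..0}"
    using has_integral_reflect_real[of "\<lambda>x. x powr p" _ L 0] base by (simp only: minus_zero)
  then have "((\<lambda>t. (- (t - (c + L))) powr p) has_integral L powr (p + 1) / (p + 1)) {c..c + L}"
    using has_integral_shift_real_ivl[of "\<lambda>x. (- x) powr p" _ "- L" 0 "- (c + L)"]
    by (simp add: algebra_simps del: has_integral_reflect_real)
  then show "((\<lambda>t. (L - \<bar>t - c\<bar>) powr p) has_integral L powr (p + 1) / (p + 1)) {c..c + L}"
    by (rule has_integral_eq[rotated]) (simp add: algebra_simps)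
  have "((\<lambda>t. (t + (L - c)) powr p) has_integral L powr (p + 1) / (p + 1)) {c - L..c}"
    using has_integral_shift_real_ivl[OF base, of "L - c"] by simp
  then show "((\<lambda>t. (L - \<bar>t - c\<bar>) powr p) has_integral L powr (p + 1) / (p + 1)) {c - L..c}"
    by (rule has_integral_eq[rotated]) (simp add: algebra_simps)
qed

lemma nn_integral_ge_has_integral:
  fixes f g :: "'a::euclidean_space \<Rightarrow> real"
  assumes "(g has_integral I) J" "J \<subseteq> S"
    and "\<And>t. t \<in> J \<Longrightarrow> 0 \<le> g t" "\<And>t. t \<in> J \<Longrightarrow> g t \<le> f t"
  shows "ennreal I \<le> (\<integral>\<^sup>+t\<in>S. ennreal (f t) \<partial>lborel)"
proof -
  have "ennreal I = (\<integral>\<^sup>+t. ennreal (g t) * indicator J t \<partial>lborel)"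
    using nn_integral_has_integral_lebesgue'[OF assms(3,1)] by simp
  also have "\<dots> \<le> (\<integral>\<^sup>+t\<in>S. ennreal (f t) \<partial>lborel)"
    using assms(2,4) by (intro nn_integral_mono) (auto simp: indicator_def ennreal_leI)
  finally show ?thesis .
qed

lemma mono_on_geninv_cdf:
  assumes "real_distribution D"
  shows "mono_on {0<..<1} (geninv (cdf D))"
proof (rule mono_onI)
  interpret real_distribution D by (rule assms)
  fix s t :: real
  assume "s \<in> {0<..<1}" "t \<in> {0<..<1}" "s \<le> t"
  then have "0 < s" "t < 1"
    by auto
  obtain x1 where "t < cdf D x1"
    using order_tendstoD(1)[OF cdf_lim_at_top_prob \<open>t < 1\<close>]
    by (auto simp: eventually_at_top_linorder)
  then have nonempty: "{x. t \<le> cdf D x} \<noteq> {}"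
    by (auto intro: less_imp_le)
  obtain x0 where "\<forall>x\<le>x0. cdf D x < s"
    using order_tendstoD(2)[OF cdf_lim_at_bot \<open>0 < s\<close>]
    by (auto simp: eventually_at_bot_linorder)
  then have "bdd_below {x. s \<le> cdf D x}"
    by (metis bdd_belowI linorder_not_le mem_Collect_eq less_imp_le)
  moreover have "{x. t \<le> cdf D x} \<subseteq> {x. s \<le> cdf D x}"
    using \<open>s \<le> t\<close> by auto
  ultimately show "geninv (cdf D) s \<le> geninv (cdf D) t"
    unfolding geninv_def by (rule cInf_superset_mono[OF nonempty])
qed

lemma nn_integral_powr_ge_tent:
  fixes f :: "real \<Rightarrow> real"
  assumes J: "J = {c..c + L} \<or> J = {c - L..c}" and "J \<subseteq> S"
    and "0 < L" "0 \<le> d" "0 < p"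
    and f: "\<And>t. t \<in> J \<Longrightarrow> d / L * (L - \<bar>t - c\<bar>) \<le> f t"
  shows "ennreal (L * d powr p / (p + 1)) \<le> (\<integral>\<^sup>+t\<in>S. ennreal (f t powr p) \<partial>lborel)"
proof (rule nn_integral_ge_has_integral)
  have "((\<lambda>t. (L - \<bar>t - c\<bar>) powr p) has_integral L powr (p + 1) / (p + 1)) J"
    using J has_integral_tent_powr[of L p c] assms by auto
  then have "((\<lambda>t. (d / L) powr p * (L - \<bar>t - c\<bar>) powr p)
      has_integral (d / L) powr p * (L powr (p + 1) / (p + 1))) J"
    by (rule has_integral_mult_right)
  moreover have "(d / L) powr p * (L powr (p + 1) / (p + 1)) = L * d powr p / (p + 1)"
    using assms by (simp add: powr_divide powr_add)
  ultimately show "((\<lambda>t. (d / L * (L - \<bar>t - c\<bar>)) powr p) has_integral L * d powr p / (p + 1)) J"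
    by (simp only: powr_mult)
  show "(d / L * (L - \<bar>t - c\<bar>)) powr p \<le> f t powr p" if "t \<in> J" for t
  proof (rule powr_mono2)
    show "0 \<le> d / L * (L - \<bar>t - c\<bar>)"
      using J that assms by auto
  qed (use f[OF that] assms in auto)
qed (use assms in auto)

lemma monotone_gap_on_one_side:
  fixes A Q :: "real \<Rightarrow> real"
  assumes A: "mono_on {0<..<1} A" and sub: "{c - l..c + l} \<subseteq> {0<..<1}"
    and Q: "\<And>t. t \<in> {c - l..c + l} \<Longrightarrow> m * \<bar>Q t - Q c\<bar> \<le> \<bar>t - c\<bar>"
    and "0 < m" "0 \<le> L" "L \<le> l"
  obtains J where "J = {c..c + L} \<or> J = {c - L..c}"
    and "\<And>t. t \<in> J \<Longrightarrow> \<bar>A c - Q c\<bar> - \<bar>t - c\<bar> / m \<le> \<bar>A t - Q t\<bar>"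
proof -
  have window: "t \<in> {0<..<1}" "c \<in> {0<..<1}" "\<bar>Q t - Q c\<bar> \<le> \<bar>t - c\<bar> / m"
    if "\<bar>t - c\<bar> \<le> L" for t
  proof -
    have t: "t \<in> {c - l..c + l}" and "c \<in> {c - l..c + l}"
      using that assms by (auto simp: abs_le_iff)
    then show "t \<in> {0<..<1}" "c \<in> {0<..<1}"
      using sub by blast+
    show "\<bar>Q t - Q c\<bar> \<le> \<bar>t - c\<bar> / m"
      using Q[OF t] assms by (simp add: pos_le_divide_eq mult.commute)
  qed
  show thesis
  proof (cases "Q c \<le> A c")
    case True
    show thesis
    proof (rule that[of "{c..c + L}"])
      fix t assume "t \<in> {c..c + L}"
      with window[of t] mono_onD[OF A, of c t] True
      show "\<bar>A c - Q c\<bar> - \<bar>t - c\<bar> / m \<le> \<bar>A t - Q t\<bar>"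
        by (auto simp: abs_le_iff)
    qed simp
  next
    case False
    show thesis
    proof (rule that[of "{c - L..c}"])
      fix t assume "t \<in> {c - L..c}"
      with window[of t] mono_onD[OF A, of t c] False
      show "\<bar>A c - Q c\<bar> - \<bar>t - c\<bar> / m \<le> \<bar>A t - Q t\<bar>"
        by (auto simp: abs_le_iff)
    qed simp
  qed
qed

lemma nn_integral_quantile_gap_ge:
  fixes A Q :: "real \<Rightarrow> real"
  assumes A: "mono_on {0<..<1} A" and sub: "{c - l..c + l} \<subseteq> {0<..<1}"
    and Q: "\<And>t. t \<in> {c - l..c + l} \<Longrightarrow> m * \<bar>Q t - Q c\<bar> \<le> \<bar>t - c\<bar>"
    and m: "0 < m" and p: "0 < p"
  shows "ennreal (min (m * \<bar>A c - Q c\<bar>) l * \<bar>A c - Q c\<bar> powr p / (p + 1))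
    \<le> (\<integral>\<^sup>+t\<in>{0<..<1}. ennreal (\<bar>A t - Q t\<bar> powr p) \<partial>lborel)"
proof -
  define d where "d = \<bar>A c - Q c\<bar>"
  define L where "L = min (m * d) l"
  show ?thesis
  proof (cases "0 < L")
    case False
    then have "L * d powr p / (p + 1) \<le> 0"
      using p by (simp add: divide_nonpos_pos mult_nonpos_nonneg)
    then show ?thesis
      by (simp add: L_def d_def ennreal_neg)
  next
    case True
    then have "L \<le> m * d" "L \<le> l"
      by (auto simp: L_def)
    obtain J where J: "J = {c..c + L} \<or> J = {c - L..c}"
      and gap: "\<And>t. t \<in> J \<Longrightarrow> d - \<bar>t - c\<bar> / m \<le> \<bar>A t - Q t\<bar>"
      using monotone_gap_on_one_side[OF A sub Q m less_imp_le[OF True] \<open>L \<le> l\<close>, folded d_def]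
      by blast
    have "d / L * (L - \<bar>t - c\<bar>) \<le> \<bar>A t - Q t\<bar>" if "t \<in> J" for t
    proof -
      have "1 / m \<le> d / L"
        using \<open>L \<le> m * d\<close> True m by (simp add: field_simps)
      then have "\<bar>t - c\<bar> / m \<le> d / L * \<bar>t - c\<bar>"
        using mult_right_mono[of "1 / m" "d / L" "\<bar>t - c\<bar>"] by simp
      then show ?thesis
        using gap[OF that] True by (simp add: right_diff_distrib)
    qed
    moreover have "J \<subseteq> {0<..<1}"
      using J sub \<open>L \<le> l\<close> by auto
    ultimately show ?thesis
      using nn_integral_powr_ge_tent[OF J _ True _ p] unfolding L_def d_def by simp
  qed
qed

lemma le_powr_inverse:
  fixes x y q :: real
  assumes "0 \<le> x" "0 < q" "x powr q \<le> y"
  shows "x \<le> y powr (1 / q)"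
proof -
  have "x = (x powr q) powr (1 / q)"
    using assms by (simp add: powr_powr)
  also have "\<dots> \<le> y powr (1 / q)"
    using assms by (intro powr_mono2) auto
  finally show ?thesis .
qed

lemma le_max_powr_if_min_mult_powr_le:
  fixes m l d p C :: real
  assumes C: "min (m * d) l * d powr p \<le> C" and "0 < m" "0 < l" "0 \<le> d" "0 < p"
  shows "d \<le> max ((C / m) powr (1 / (p + 1))) ((C / l) powr (1 / p))"
proof (cases "m * d \<le> l")
  case True
  have "d powr (p + 1) = d * d powr p"
    using assms by (simp add: powr_add)
  then have "d powr (p + 1) \<le> C / m"
    using C True assms by (simp add: field_simps mult.assoc)
  then have "d \<le> (C / m) powr (1 / (p + 1))"
    using assms by (intro le_powr_inverse) auto
  then show ?thesis
    by simp
next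
  case False
  then have "d powr p \<le> C / l"
    using C assms by (simp add: field_simps)
  then have "d \<le> (C / l) powr (1 / p)"
    using assms by (intro le_powr_inverse) auto
  then show ?thesis
    by simp
qed

abbreviation phi :: "real \<Rightarrow> real" where
  "phi \<equiv> std_normal_density"

abbreviation Phi_inv :: "real \<Rightarrow> real" where
  "Phi_inv \<equiv> geninv Phi"

lemma phi_eq: "phi x = exp (- x\<^sup>2 / 2) / sqrt (2 * pi)"
  by (simp add: std_normal_density_def)

lemma phi_pos: "0 < phi x"
  by (simp add: phi_eq)

lemma continuous_on_phi: "continuous_on A phi"
  unfolding phi_eq by (intro continuous_intros) auto

lemma phi_has_real_derivative: "(phi has_real_derivative - x * phi x) (at x)"
  unfolding phi_eq
  by (rule derivative_eq_intros refl | simp)+ (simp add: field_simps power2_eq_square)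

lemma phi_tendsto_at_top: "(phi \<longlongrightarrow> 0) at_top"
proof -
  have "filterlim (\<lambda>x::real. - x\<^sup>2 / 2) at_bot at_top"
    by real_asymp
  then have "((\<lambda>x::real. exp (- x\<^sup>2 / 2)) \<longlongrightarrow> 0) at_top"
    by (rule filterlim_compose[OF exp_at_bot])
  then show ?thesis
    unfolding phi_eq by (auto intro: tendsto_divide_zero)
qed

lemma real_distribution_std_normal: "real_distribution (density lborel phi)"
  by (simp add: real_distribution_def real_distribution_axioms_def prob_space_normal_density)

lemma Phi_diff_eq_integral:
  assumes "a \<le> b"
  shows "Phi b - Phi a = integral {a..b} phi"
proof (cases "a = b")
  case False
  with assms have "a < b" by simp
  interpret real_distribution "density lborel phi"
    by (rule real_distribution_std_normal)
  have phi_integrable: "phi integrable_on {a..b}"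
    by (rule integrable_continuous_interval[OF continuous_on_phi])
  have "emeasure (density lborel phi) {a<..b} = (\<integral>\<^sup>+x. ennreal (phi x) * indicator {a<..b} x \<partial>lborel)"
    by (rule emeasure_density) auto
  also have "\<dots> = (\<integral>\<^sup>+x. ennreal (phi x) * indicator {a..b} x \<partial>lborel)"
    by (intro nn_integral_cong_AE, use AE_lborel_singleton[of a] in eventually_elim)
       (auto simp: indicator_def)
  also have "\<dots> = integral {a..b} phi"
    by (rule nn_integral_has_integral_lebesgue'[OF _ integrable_integral[OF phi_integrable]])
       (simp add: less_imp_le phi_pos)
  finally show ?thesis
    using cdf_diff_eq[OF \<open>a < b\<close>] integral_nonneg[OF phi_integrable] phi_pos
    by (simp add: Phi_def measure_def less_imp_le)
qed simp

lemma Phi_has_real_derivative: "(Phi has_real_derivative phi x) (at x)"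
proof -
  have "((\<lambda>y. integral {x - 1..y} phi) has_real_derivative phi x) (at x within {x - 1..x + 1})"
    by (rule integral_has_real_derivative) (auto intro: continuous_on_phi)
  then have "((\<lambda>y. Phi (x - 1) + integral {x - 1..y} phi) has_real_derivative phi x) (at x)"
    by (auto intro!: derivative_eq_intros simp: at_within_Icc_at)
  then show ?thesis
    by (rule has_field_derivative_transform_within_open[where S = "{x - 1<..<x + 1}"])
       (auto simp: Phi_diff_eq_integral[symmetric])
qed

lemma isCont_Phi: "isCont Phi x"
  using Phi_has_real_derivative DERIV_isCont by blast

lemma Phi_strict_mono: "x < y \<Longrightarrow> Phi x < Phi y"
  by (rule DERIV_pos_imp_increasing) (auto intro: Phi_has_real_derivative phi_pos)

lemma Phi_le_iff: "Phi x \<le> Phi y \<longleftrightarrow> x \<le> y"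
  by (metis Phi_strict_mono linorder_not_less order_le_less)

lemma Phi_tendsto_at_top: "(Phi \<longlongrightarrow> 1) at_top"
  unfolding Phi_def by (rule real_distribution.cdf_lim_at_top_prob[OF real_distribution_std_normal])

lemma Phi_tendsto_at_bot: "(Phi \<longlongrightarrow> 0) at_bot"
  unfolding Phi_def
  by (rule finite_borel_measure.cdf_lim_at_bot
      [OF real_distribution.finite_borel_measure_M[OF real_distribution_std_normal]])

lemma Phi_pos: "0 < Phi x"
proof -
  have "0 \<le> Phi (x - 1)"
    unfolding Phi_def
    by (rule finite_borel_measure.cdf_nonneg
        [OF real_distribution.finite_borel_measure_M[OF real_distribution_std_normal]])
  then show ?thesis
    using Phi_strict_mono[of "x - 1" x] by simp
qed

lemma Phi_less_1: "Phi x < 1"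
proof -
  have "Phi (x + 1) \<le> 1"
    unfolding Phi_def by (rule real_distribution.cdf_bounded_prob[OF real_distribution_std_normal])
  then show ?thesis
    using Phi_strict_mono[of x "x + 1"] by simp
qed

lemma Phi_0: "Phi 0 = 1 / 2"
proof -
  define S where "S x = Phi x + Phi (- x)" for x
  have "(S has_real_derivative phi x - phi (- x)) (at x)" for x
    unfolding S_def
    by (auto intro!: derivative_eq_intros DERIV_chain2[OF Phi_has_real_derivative] Phi_has_real_derivative)
  then have "(S has_real_derivative 0) (at x)" for x
    by (simp add: phi_eq)
  then have S_const: "S = (\<lambda>_. S 0)"
    by (metis DERIV_isconst_all)
  have "(S \<longlongrightarrow> 1 + 0) at_top"
    unfolding S_def
    by (intro tendsto_add Phi_tendsto_at_top filterlim_compose[OF Phi_tendsto_at_bot filterlim_uminus_at_bot_at_top])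
  then have "S 0 = 1"
    by (subst (asm) S_const) (simp add: tendsto_const_iff)
  then show ?thesis
    by (simp add: S_def)
qed

lemma Phi_inv_Phi: "Phi_inv (Phi x) = x"
proof -
  have "{y. Phi x \<le> Phi y} = {x..}"
    by (auto simp: Phi_le_iff)
  then show ?thesis
    by (simp add: geninv_def)
qed

lemma Phi_Phi_inv:
  assumes "0 < t" "t < 1"
  shows "Phi (Phi_inv t) = t"
proof -
  obtain a where "Phi a < t"
    using order_tendstoD(2)[OF Phi_tendsto_at_bot \<open>0 < t\<close>] by (auto simp: eventually_at_bot_linorder)
  moreover obtain N where "\<forall>n\<ge>N. t < Phi n"
    using order_tendstoD(1)[OF Phi_tendsto_at_top \<open>t < 1\<close>] by (auto simp: eventually_at_top_linorder)
  then have "t < Phi (max a N)" "a \<le> max a N"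
    by simp_all
  ultimately obtain x where "Phi x = t"
    using IVT[of Phi a t "max a N"] isCont_Phi less_imp_le by blast
  then show ?thesis
    using Phi_inv_Phi by auto
qed

lemma Phi_inv_le_iff: "0 < t \<Longrightarrow> t < 1 \<Longrightarrow> Phi_inv t \<le> x \<longleftrightarrow> t \<le> Phi x"
  by (metis Phi_Phi_inv Phi_le_iff)

lemma le_Phi_inv_iff: "0 < t \<Longrightarrow> t < 1 \<Longrightarrow> x \<le> Phi_inv t \<longleftrightarrow> Phi x \<le> t"
  by (metis Phi_Phi_inv Phi_le_iff)

lemma Phi_inv_nonneg: "1 / 2 \<le> t \<Longrightarrow> t < 1 \<Longrightarrow> 0 \<le> Phi_inv t"
  by (simp add: le_Phi_inv_iff Phi_0)

lemma mono_on_Phi_inv: "mono_on {0<..<1} Phi_inv"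
  by (rule mono_onI) (auto simp: Phi_inv_le_iff Phi_Phi_inv)

lemma filterlim_Phi_inv_at_left_1: "filterlim Phi_inv at_top (at_left 1)"
  unfolding filterlim_at_top
proof
  fix x
  have "eventually (\<lambda>t. t \<in> {Phi x<..<1}) (at_left 1)"
    by (rule eventually_at_left_real[OF Phi_less_1])
  then show "eventually (\<lambda>t. x \<le> Phi_inv t) (at_left 1)"
    by eventually_elim (use Phi_pos[of x] in \<open>auto simp: le_Phi_inv_iff\<close>)
qed

lemma Phi_inv_has_real_derivative:
  assumes "0 < t" "t < 1"
  shows "(Phi_inv has_real_derivative 1 / phi (Phi_inv t)) (at t)"
proof -
  have "isCont Phi_inv (Phi (Phi_inv t))"
    by (rule isCont_inverse_function[where d = 1]) (auto simp: Phi_inv_Phi isCont_Phi)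
  then have "isCont Phi_inv t"
    by (simp add: Phi_Phi_inv assms)
  then show ?thesis
    using DERIV_inverse_function[OF Phi_has_real_derivative, of Phi_inv t 0 1] assms phi_pos
    by (simp add: Phi_Phi_inv Phi_inv_Phi divide_inverse less_imp_neq[symmetric])
qed

lemma phi_Phi_inv_has_real_derivative:
  assumes "0 < t" "t < 1"
  shows "((\<lambda>t. phi (Phi_inv t)) has_real_derivative - Phi_inv t) (at t)"
  using DERIV_chain2[OF phi_has_real_derivative Phi_inv_has_real_derivative[OF assms]] phi_pos
  by (simp add: less_imp_neq[symmetric])

lemma concave_on_phi_Phi_inv: "concave_on {0<..<1} (\<lambda>t. phi (Phi_inv t))"
proof -
  have "convex_on {0<..<1} (\<lambda>t. - phi (Phi_inv t))"
    by (rule convex_on_realI[where f' = Phi_inv])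
       (auto intro!: derivative_eq_intros phi_Phi_inv_has_real_derivative mono_onD[OF mono_on_Phi_inv])
  then show ?thesis
    by (simp add: concave_on_def)
qed

lemma Q1_Phi:
  assumes "0 < u" "u \<le> 1 / 2"
  shows "u * Q1 Phi u = phi (Phi_inv (1 - u))"
proof -
  define F where "F t = phi (Phi_inv (1 - t))" for t
  have F_deriv: "(F has_real_derivative Phi_inv (1 - t)) (at t)" if "0 < t" "t < 1" for t
  proof -
    have "((\<lambda>s. 1 - s) has_real_derivative - 1) (at t)"
      by (auto intro!: derivative_eq_intros)
    from DERIV_chain2[OF phi_Phi_inv_has_real_derivative this] that show ?thesis
      unfolding F_def by simp
  qed
  have "(LBINT t=ereal 0..ereal u. Phi_inv (1 - t)) = F u - 0"
  proof (rule interval_integral_FTC_nonneg)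
    show "(F has_real_derivative Phi_inv (1 - t)) (at t)" if "ereal 0 < ereal t" "ereal t < ereal u" for t
      using that assms by (intro F_deriv) auto
    show "isCont (\<lambda>t. Phi_inv (1 - t)) t" if "ereal 0 < ereal t" "ereal t < ereal u" for t
      using that assms
      by (intro continuous_intros isCont_o2[OF _ DERIV_isCont[OF Phi_inv_has_real_derivative]]) auto
    show "AE t in lborel. ereal 0 < ereal t \<longrightarrow> ereal t < ereal u \<longrightarrow> 0 \<le> Phi_inv (1 - t)"
      using assms by (intro AE_I2) (auto intro!: Phi_inv_nonneg)
    have "filterlim (\<lambda>t. 1 - t) (at_left 1) (at_right (0::real))"
      by real_asymp
    then show "((F \<circ> real_of_ereal) \<longlongrightarrow> 0) (at_right (ereal 0))"
      unfolding ereal_tendsto_simps1 F_def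
      by (intro filterlim_compose[OF phi_tendsto_at_top] filterlim_compose[OF filterlim_Phi_inv_at_left_1])
    show "((F \<circ> real_of_ereal) \<longlongrightarrow> F u) (at_left (ereal u))"
      unfolding ereal_tendsto_simps1
      using DERIV_isCont[OF F_deriv, of u] assms by (simp add: isCont_def filterlim_at_split)
  qed (use assms in auto)
  then show ?thesis
    using assms by (simp add: Q1_def F_def zero_ereal_def)
qed

lemma tail_window_subset:
  fixes u :: real
  assumes "0 < u" "u \<le> 1 / 2"
  shows "{1 - u - u / exp 1..1 - u + u / exp 1} \<subseteq> {0<..<1}"
proof -
  have "u / exp 1 < u"
    using assms by (simp add: divide_less_eq)
  then show ?thesis
    using assms by auto
qed

lemma phi_Phi_inv_window_ge:
  assumes u: "0 < u" "u \<le> 1 / 2" and r: "r \<in> {1 - u - u / exp 1..1 - u + u / exp 1}"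
  shows "phi (Phi_inv (1 - u)) / exp 1 \<le> phi (Phi_inv r)"
proof -
  have "min (1 - u) (1 - (1 - u)) = u"
    using u by (subst min_absorb2) auto
  moreover have "\<bar>r - (1 - u)\<bar> \<le> u / exp 1"
    using r unfolding atLeastAtMost_iff abs_le_iff by linarith
  ultimately have near: "\<bar>r - (1 - u)\<bar> \<le> 1 / exp 1 * min (1 - u) (1 - (1 - u))"
    by simp
  have "phi (Phi_inv (1 - u)) / exp 1 \<le> (1 - 1 / exp 1) * phi (Phi_inv (1 - u))"
    using exp_ge_add_one_self[of 1] phi_pos by (simp add: field_simps)
  also have "\<dots> \<le> phi (Phi_inv r)"
  proof (rule concave_on_unit_interval_ge[OF concave_on_phi_Phi_inv _ _ _ near])
    show "r \<in> {0<..<1}"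
      using tail_window_subset[OF u] r by blast
    show "1 - u \<in> {0<..<1}"
      using u by simp
  qed (simp add: less_imp_le phi_pos)
  finally show ?thesis .
qed

lemma Phi_inv_lipschitz_near:
  assumes u: "0 < u" "u \<le> 1 / 2" and t: "t \<in> {1 - u - u / exp 1..1 - u + u / exp 1}"
  shows "phi (Phi_inv (1 - u)) / exp 1 * \<bar>Phi_inv t - Phi_inv (1 - u)\<bar> \<le> \<bar>t - (1 - u)\<bar>"
proof -
  define S where "S = {1 - u - u / exp 1..1 - u + u / exp 1}"
  define m where "m = phi (Phi_inv (1 - u)) / exp 1"
  have "0 < m"
    by (simp add: m_def phi_pos)
  have "norm (Phi_inv t - Phi_inv (1 - u)) \<le> 1 / m * norm (t - (1 - u))"
  proof (rule field_differentiable_bound)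
    show "convex S"
      by (simp add: S_def)
    show "(Phi_inv has_field_derivative 1 / phi (Phi_inv r)) (at r within S)" if "r \<in> S" for r
    proof -
      have "0 < r" "r < 1"
        using that tail_window_subset[OF u] unfolding S_def by auto
      then show ?thesis
        by (rule has_field_derivative_at_within[OF Phi_inv_has_real_derivative])
    qed
    show "norm (1 / phi (Phi_inv r)) \<le> 1 / m" if "r \<in> S" for r
    proof -
      have "1 / phi (Phi_inv r) \<le> 1 / m"
        using phi_Phi_inv_window_ge[OF u, of r] that \<open>0 < m\<close>
        unfolding S_def m_def by (intro divide_left_mono) (auto simp: phi_pos)
      then show ?thesis
        using phi_pos[of "Phi_inv r"] by simp
    qed
    show "t \<in> S" "1 - u \<in> S"
      using t u by (simp_all add: S_def)
  qed
  then show ?thesis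
    using \<open>0 < m\<close> by (simp add: m_def field_simps)
qed

theorem proposition5p1:
  fixes M :: "'a measure" and Z :: "'a \<Rightarrow> real" and p u :: real
  assumes "prob_space M"
    and "Z \<in> borel_measurable M"
    and "integrable M Z" and "integral\<^sup>L M Z = 0"
    and "integrable M (\<lambda>\<omega>. (Z \<omega>)\<^sup>2)" and "integral\<^sup>L M (\<lambda>\<omega>. (Z \<omega>)\<^sup>2) \<le> 2"
    and "p \<ge> 1"
    and "Kp (cdf (distr M borel Z)) p < \<infinity>"
    and "0 < u" and "u \<le> 1 / 2"
  shows "\<bar>geninv (cdf (distr M borel Z)) (1 - u) - geninv Phi (1 - u)\<bar>
    \<le> max (((p + 1) * exp 1 * enn2real (Kp (cdf (distr M borel Z)) p) / (u * Q1 Phi u)) powr (1 / (p + 1)))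
           (((p + 1) * exp 1 * enn2real (Kp (cdf (distr M borel Z)) p) / u) powr (1 / p))"
proof -
  define F where "F = cdf (distr M borel Z)"
  define d where "d = \<bar>geninv F (1 - u) - Phi_inv (1 - u)\<bar>"
  define m where "m = phi (Phi_inv (1 - u)) / exp 1"
  define C where "C = (p + 1) * enn2real (Kp F p)"
  have "mono_on {0<..<1} (geninv F)"
    unfolding F_def using prob_space.real_distribution_distr[OF assms(1,2)]
    by (rule mono_on_geninv_cdf)
  moreover have "{1 - u - u / exp 1..1 - u + u / exp 1} \<subseteq> {0<..<1}"
    using assms(9,10) by (rule tail_window_subset)
  ultimately have "ennreal (min (m * d) (u / exp 1) * d powr p / (p + 1)) \<le> Kp F p"
    unfolding Kp_def d_def m_def using assms(7,9,10) phi_pos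
    by (intro nn_integral_quantile_gap_ge Phi_inv_lipschitz_near) auto
  moreover have "Kp F p = ennreal (enn2real (Kp F p))"
    using assms(8) by (simp add: F_def less_top[symmetric] ennreal_enn2real)
  ultimately have "min (m * d) (u / exp 1) * d powr p / (p + 1) \<le> enn2real (Kp F p)"
    by (metis ennreal_le_iff enn2real_nonneg)
  then have "min (m * d) (u / exp 1) * d powr p \<le> C"
    using assms(7) by (simp add: C_def pos_divide_le_eq mult.commute)
  then have "d \<le> max ((C / m) powr (1 / (p + 1))) ((C / (u / exp 1)) powr (1 / p))"
    using assms(7,9) phi_pos by (intro le_max_powr_if_min_mult_powr_le) (auto simp: m_def d_def)
  moreover have "C / m = (p + 1) * exp 1 * enn2real (Kp F p) / (u * Q1 Phi u)"
    using Q1_Phi[OF assms(9,10)] by (simp add: C_def m_def)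
  moreover have "C / (u / exp 1) = (p + 1) * exp 1 * enn2real (Kp F p) / u"
    by (simp add: C_def)
  ultimately show ?thesis
    unfolding d_def F_def by metis
qed

end
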